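(* Let $n\ge 2$ and let $A_1,\dots,A_n$ be points in the plane lying on a circle $T$ with centre $O$. Let $\Gamma$ be a circle with centre $O$, and let $k$ be a positive integer with $k>\lfloor n/2\rfloor$. If $\sum_{i=1}^n |XA_i|^{2k}$ does not depend on the position of $X\in\Gamma$, then $A_1,\dots,A_n$ are the vertices of a regular $n$-gon (inscribed in $T$).
   Context: $|XA|$ denotes Euclidean distance; $\lfloor\cdot\rfloor$ is the integer part. *)

theory Defs
  imports Complex_Main
begin

definition regular_ngon :: "nat \<Rightarrow> complex \<Rightarrow> real \<Rightarrow> (nat \<Rightarrow> complex) \<Rightarrow> bool" where
  "regular_ngon n Oc r A \<longleftrightarrow>
     (\<exists>\<theta>::real. \<exists>\<sigma>::nat \<Rightarrow> nat. bij_betw \<sigma> {1..n} {1..n} \<and>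
        (\<forall>i\<in>{1..n}. A i = Oc + complex_of_real r * cis (\<theta> + 2 * pi * real (\<sigma> i) / real n)))"

end

theory Submission
  imports Defs "HOL-Computational_Algebra.Polynomial"
begin

text \<open>Put \<open>A i = O + r w i\<close> and \<open>X = O + \<rho> z\<close> with \<open>|w i| = |z| = 1\<close>. Then
\<open>|X - A i|^2 = N(t) / t\<close> for \<open>t = -z / w i\<close>, where \<open>N(t) = \<rho>r + (\<rho>^2 + r^2) t + \<rho>r t^2\<close>.
Hence \<open>z^k \<Sum>i. |X - A i|^(2k)\<close> is a polynomial in \<open>z\<close> whose coefficient at \<open>z^(k-m)\<close> is,
up to sign, the coefficient of \<open>N^k\<close> at \<open>t^(k-m)\<close> times \<open>\<Sum>i. w i ^ m\<close>. As \<open>N^k\<close> has positive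
coefficients, constancy on the circle forces the power sums \<open>p 1, \<dots>, p k\<close> of the \<open>w i\<close> to
vanish. Newton's identities then kill the coefficients of \<open>q = \<Prod>i. (X - w i)\<close> at
\<open>X^(n-1), \<dots>, X^(n-k)\<close>; since \<open>cnj (w i) = 1 / w i\<close>, the reflection of \<open>q\<close> is a multiple of the
conjugate product, so the coefficients at \<open>X^1, \<dots>, X^k\<close> vanish as well. For \<open>k > n/2\<close> this
leaves \<open>q = X^n - c\<close>, whose roots are simple: the \<open>w i\<close> are the \<open>n\<close> distinct \<open>n\<close>-th roots
of \<open>c\<close>.\<close>

lemma coeff_pCons3_mult:
  fixes a b c :: "'a::comm_semiring_1"
  shows "coeff ([:a, b, c:] * p) j = a * coeff p j + (if 1 \<le> j then b * coeff p (j - 1) else 0)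
    + (if 2 \<le> j then c * coeff p (j - 2) else 0)"
  by (cases j; cases "j - 1") (simp_all add: mult_pCons_left add.assoc)

lemma coeff_trinomial_power_nonneg:
  fixes a b c :: "'a::linordered_semidom"
  assumes "0 \<le> a" "0 \<le> b" "0 \<le> c"
  shows "0 \<le> coeff ([:a, b, c:] ^ k) j"
proof (induction k arbitrary: j)
  case 0
  then show ?case by (simp add: coeff_1)
next
  case (Suc k)
  then show ?case
    using assms by (simp only: power_Suc coeff_pCons3_mult) (simp add: add_nonneg_nonneg)
qed

lemma coeff_trinomial_power_pos:
  fixes a b c :: "'a::linordered_semidom"
  assumes "0 < a" "0 < b" "0 < c" and "j \<le> 2 * k"
  shows "0 < coeff ([:a, b, c:] ^ k) j"
  using assms(4)
proof (induction k arbitrary: j)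
  case 0
  then show ?case by (simp add: coeff_1)
next
  case (Suc k)
  let ?p = "[:a, b, c:] ^ k"
  let ?s1 = "a * coeff ?p j"
    and ?s2 = "if 1 \<le> j then b * coeff ?p (j - 1) else 0"
    and ?s3 = "if 2 \<le> j then c * coeff ?p (j - 2) else 0"
  have "0 \<le> coeff ?p i" for i
    using assms by (intro coeff_trinomial_power_nonneg) simp_all
  then have "0 \<le> ?s1" "0 \<le> ?s2" "0 \<le> ?s3"
    using assms by simp_all
  moreover have "0 < ?s1 \<or> 0 < ?s2 \<or> 0 < ?s3"
  proof -
    consider "j \<le> 2 * k" | "j = 1" | "2 \<le> j" "j - 2 \<le> 2 * k"
      using Suc.prems by fastforce
    then show ?thesis
      by cases (use Suc.IH assms in simp_all)
  qed
  ultimately have "0 < ?s1 + ?s2 + ?s3"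
    by (meson add_nonneg_nonneg add_nonneg_pos add_pos_nonneg)
  then show ?case
    by (simp only: power_Suc coeff_pCons3_mult)
qed

lemma coeff_of_real_trinomial_power:
  "coeff ([:of_real a, of_real b, of_real c:] ^ k) j
     = (of_real (coeff ([:a, b, c:] ^ k) j) :: 'a::{comm_ring_1, real_algebra_1})"
proof (induction k arbitrary: j)
  case 0
  then show ?case by (simp add: coeff_1)
next
  case (Suc k)
  then show ?case by (simp only: power_Suc coeff_pCons3_mult) simp
qed

lemma infinite_unit_circle: "infinite {z::complex. cmod z = 1}"
proof -
  define f where "f n = Complex (1 / (real n + 1)) (sqrt (1 - (1 / (real n + 1))\<^sup>2))" for n
  have "inj f"
    by (rule injI) (auto simp: f_def)
  moreover have "range f \<subseteq> {z. cmod z = 1}"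
    by (auto simp: f_def cmod_def power_le_one)
  ultimately show ?thesis
    using range_inj_infinite infinite_super by blast
qed

lemma poly_eq_0_if_vanishes_on_unit_circle:
  fixes p :: "complex poly"
  assumes "\<And>z. cmod z = 1 \<Longrightarrow> poly p z = 0"
  shows "p = 0"
  using assms poly_roots_finite[of p] infinite_unit_circle
  by (metis (mono_tags, lifting) mem_Collect_eq rev_finite_subset subsetI)

lemma of_real_norm_diff_power_on_unit_circle:
  fixes z w :: complex and \<rho> r :: real
  assumes z: "cmod z = 1" and w: "cmod w = 1"
  shows "z ^ k * of_real (cmod (of_real \<rho> * z - of_real r * w) ^ (2 * k))
    = (- w) ^ k * poly ([:of_real (\<rho> * r), of_real (\<rho>\<^sup>2 + r\<^sup>2), of_real (\<rho> * r):] ^ k) (- z / w)"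
proof -
  let ?v = "of_real \<rho> * z - of_real r * w"
  define q where "q = poly [:of_real (\<rho> * r), of_real (\<rho>\<^sup>2 + r\<^sup>2), of_real (\<rho> * r):] (- z / w)"
  have "z \<noteq> 0" "w \<noteq> 0"
    using z w by auto
  have "cnj z = 1 / z" "cnj w = 1 / w"
    using complex_norm_square[of z] complex_norm_square[of w] z w \<open>z \<noteq> 0\<close> \<open>w \<noteq> 0\<close>
    by (simp_all add: field_simps)
  then have "of_real (cmod ?v ^ 2) = ?v * (of_real \<rho> / z - of_real r / w)"
    by (simp only: complex_norm_square) simp
  also have "\<dots> = (- w / z) * q"
    using \<open>z \<noteq> 0\<close> \<open>w \<noteq> 0\<close> by (simp add: q_def field_simps power2_eq_square)
  finally have "of_real (cmod ?v ^ (2 * k)) = ((- w / z) * q) ^ k"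
    by (metis of_real_power power_mult)
  then have "z ^ k * of_real (cmod ?v ^ (2 * k)) = (z * ((- w / z) * q)) ^ k"
    by (simp only: power_mult_distrib)
  also have "z * ((- w / z) * q) = - w * q"
    using \<open>z \<noteq> 0\<close> by simp
  finally show ?thesis
    unfolding poly_power q_def[symmetric] by (simp only: power_mult_distrib)
qed

lemma power_sums_eq_0_if_norm_power_sum_constant:
  fixes w :: "'i \<Rightarrow> complex" and \<rho> r c :: real
  assumes unit: "\<forall>i\<in>I. cmod (w i) = 1" and "\<rho> > 0" "r > 0"
    and const: "\<forall>z. cmod z = 1 \<longrightarrow> (\<Sum>i\<in>I. cmod (of_real \<rho> * z - of_real r * w i) ^ (2 * k)) = c"
    and m: "m \<in> {1..k}"
  shows "(\<Sum>i\<in>I. w i ^ m) = 0"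
proof -
  define N :: "complex poly" where
    "N = [:of_real (\<rho> * r), of_real (\<rho>\<^sup>2 + r\<^sup>2), of_real (\<rho> * r):]"
  define P where
    "P = (\<Sum>i\<in>I. smult ((- w i) ^ k) (pcompose (N ^ k) [:0, - 1 / w i:])) - monom (of_real c) k"
  have "P = 0"
  proof (rule poly_eq_0_if_vanishes_on_unit_circle)
    fix z :: complex
    assume z: "cmod z = 1"
    have "poly P z = (\<Sum>i\<in>I. (- w i) ^ k * poly (N ^ k) (- z / w i)) - of_real c * z ^ k"
      by (simp add: P_def poly_sum poly_pcompose poly_monom del: poly_power)
    also have "\<dots> = (\<Sum>i\<in>I. z ^ k * of_real (cmod (of_real \<rho> * z - of_real r * w i) ^ (2 * k)))
        - of_real c * z ^ k"
      using unit z unfolding N_def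
      by (simp only: of_real_norm_diff_power_on_unit_circle cong: sum.cong)
    also have "\<dots> = z ^ k * of_real (\<Sum>i\<in>I. cmod (of_real \<rho> * z - of_real r * w i) ^ (2 * k))
        - of_real c * z ^ k"
      by (simp only: sum_distrib_left of_real_sum)
    also have "\<dots> = 0"
      using const z by simp
    finally show "poly P z = 0" .
  qed
  have "k - m \<noteq> k"
    using m by auto
  then have "coeff P (k - m) = (\<Sum>i\<in>I. (- w i) ^ k * (- 1 / w i) ^ (k - m)) * coeff (N ^ k) (k - m)"
    by (simp add: P_def coeff_sum coeff_pcompose_linear sum_distrib_right mult.assoc)
  also have "(\<Sum>i\<in>I. (- w i) ^ k * (- 1 / w i) ^ (k - m)) = (- 1) ^ m * (\<Sum>i\<in>I. w i ^ m)"
    unfolding sum_distrib_left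
  proof (rule sum.cong)
    fix i
    assume "i \<in> I"
    then have "w i \<noteq> 0"
      using unit by auto
    have "(- w i) ^ k = (- w i) ^ m * (- w i) ^ (k - m)"
      using m by (metis atLeastAtMost_iff le_add_diff_inverse power_add)
    then have "(- w i) ^ k * (- 1 / w i) ^ (k - m) = (- w i) ^ m * (- w i * (- 1 / w i)) ^ (k - m)"
      by (simp only: power_mult_distrib mult.assoc)
    also have "\<dots> = (- w i) ^ m"
      using \<open>w i \<noteq> 0\<close> by simp
    also have "\<dots> = (- 1) ^ m * w i ^ m"
      by (rule power_minus)
    finally show "(- w i) ^ k * (- 1 / w i) ^ (k - m) = (- 1) ^ m * w i ^ m" .
  qed simp
  finally have "(- 1) ^ m * (\<Sum>i\<in>I. w i ^ m) * coeff (N ^ k) (k - m) = 0"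
    using \<open>P = 0\<close> by simp
  moreover have "0 < coeff ([:\<rho> * r, \<rho>\<^sup>2 + r\<^sup>2, \<rho> * r:] ^ k) (k - m)"
    using assms by (intro coeff_trinomial_power_pos) (auto simp: add_pos_pos)
  then have "coeff (N ^ k) (k - m) \<noteq> 0"
    unfolding N_def coeff_of_real_trinomial_power by simp
  ultimately show ?thesis
    by simp
qed

lemma coeff_linear_quotient:
  fixes x :: "'a::comm_ring_1"
  assumes q: "q = [:- x, 1:] * p" and deg: "degree p < n"
  shows "coeff p m = (\<Sum>j=Suc m..n. coeff q j * x ^ (j - Suc m))"
proof (induction "n - m" arbitrary: m rule: less_induct)
  case less
  show ?case
  proof (cases "n \<le> m")
    case True
    then show ?thesis
      using deg by (simp add: coeff_eq_0)
  next
    case False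
    have "(\<Sum>j=Suc (Suc m)..n. coeff q j * x ^ (j - Suc m))
        = x * (\<Sum>j=Suc (Suc m)..n. coeff q j * x ^ (j - Suc (Suc m)))"
      unfolding sum_distrib_left
    proof (rule sum.cong)
      fix j
      assume "j \<in> {Suc (Suc m)..n}"
      then have "j - Suc m = Suc (j - Suc (Suc m))"
        by auto
      then show "coeff q j * x ^ (j - Suc m) = x * (coeff q j * x ^ (j - Suc (Suc m)))"
        by (simp add: mult.left_commute)
    qed simp
    then have "(\<Sum>j=Suc m..n. coeff q j * x ^ (j - Suc m))
        = coeff q (Suc m) + x * (\<Sum>j=Suc (Suc m)..n. coeff q j * x ^ (j - Suc (Suc m)))"
      using False by (simp add: sum.atLeast_Suc_atMost)
    also have "\<dots> = coeff q (Suc m) + x * coeff p (Suc m)"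
      using less False by simp
    also have "\<dots> = coeff p m"
      using q by (simp add: mult_pCons_left)
    finally show ?thesis ..
  qed
qed

text \<open>Newton's identities in the form needed here: \<open>q' = \<Sum>i. q / (X - w i)\<close>, and comparing the
coefficients at \<open>X^(s-1)\<close> gives \<open>s q\<^sub>s = \<Sum>j\<ge>s. q\<^sub>j p(j - s) = n q\<^sub>s\<close> once \<open>p 1, \<dots>, p k\<close>
vanish (here \<open>q\<^sub>j\<close> is the coefficient at \<open>X^j\<close> and \<open>p 0 = n\<close>).\<close>

lemma coeff_prod_linear_eq_0_if_power_sums_eq_0:
  fixes w :: "'i \<Rightarrow> 'a::field_char_0"
  assumes "finite I" and ps: "\<forall>m\<in>{1..k}. (\<Sum>i\<in>I. w i ^ m) = 0"
    and s: "card I - k \<le> s" "0 < s" "s < card I"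
  shows "coeff (\<Prod>i\<in>I. [:- w i, 1:]) s = 0"
proof -
  define n where "n = card I"
  define q where "q = (\<Prod>i\<in>I. [:- w i, 1:])"
  define p where "p i = (\<Prod>l\<in>I - {i}. [:- w l, 1:])" for i
  have p: "coeff (p i) m = (\<Sum>j=Suc m..n. coeff q j * w i ^ (j - Suc m))" if "i \<in> I" for i m
  proof (rule coeff_linear_quotient)
    show "q = [:- w i, 1:] * p i"
      unfolding q_def p_def using \<open>finite I\<close> that by (simp add: prod.remove)
    have "degree (p i) \<le> card (I - {i})"
      unfolding p_def using degree_prod_sum_le[of "I - {i}" "\<lambda>l. [:- w l, 1:]"] \<open>finite I\<close>
      by simp
    also have "\<dots> < n"
      using card_Diff1_less[OF \<open>finite I\<close> that] by (simp add: n_def)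
    finally show "degree (p i) < n" .
  qed
  obtain m where m: "s = Suc m"
    using s by (cases s) auto
  have "of_nat s * coeff q s = coeff (pderiv q) m"
    by (simp add: coeff_pderiv m)
  also have "\<dots> = (\<Sum>i\<in>I. \<Sum>j=s..n. coeff q j * w i ^ (j - s))"
    by (simp add: q_def p_def pderiv_prod pderiv_pCons coeff_sum p[unfolded p_def] m cong: sum.cong)
  also have "\<dots> = (\<Sum>j=s..n. coeff q j * (\<Sum>i\<in>I. w i ^ (j - s)))"
    unfolding sum_distrib_left by (rule sum.swap)
  also have "\<dots> = coeff q s * of_nat n"
  proof -
    have "(\<Sum>i\<in>I. w i ^ (j - s)) = 0" if "j \<in> {Suc s..n}" for j
    proof -
      have "j - s \<in> {1..k}"
        using that s by (auto simp: n_def)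
      then show ?thesis
        using ps by blast
    qed
    then show ?thesis
      using s by (simp add: sum.atLeast_Suc_atMost n_def)
  qed
  finally have "(of_nat s - of_nat n) * coeff q s = 0"
    by (simp add: algebra_simps)
  moreover have "(of_nat s :: 'a) \<noteq> of_nat n"
    using s by (simp add: n_def)
  ultimately show ?thesis
    by (simp add: q_def)
qed

lemma reflect_prod_linear_unit_circle:
  fixes w :: "'i \<Rightarrow> complex"
  assumes "\<forall>i\<in>I. cmod (w i) = 1"
  shows "reflect_poly (\<Prod>i\<in>I. [:- w i, 1:]) = smult (\<Prod>i\<in>I. - w i) (\<Prod>i\<in>I. [:- cnj (w i), 1:])"
proof -
  have reflect_linear: "reflect_poly [:- w i, 1:] = smult (- w i) [:- cnj (w i), 1:]" if "i \<in> I" for i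
  proof -
    have "w i * cnj (w i) = 1"
      using complex_norm_square[of "w i"] assms that by simp
    moreover have "reflect_poly [:- w i, 1:] = [:1, - w i:]"
      by (rule poly_eqI) (auto simp: coeff_reflect_poly coeff_pCons split: nat.split)
    ultimately show ?thesis
      by simp
  qed
  have "reflect_poly (\<Prod>i\<in>I. [:- w i, 1:]) = (\<Prod>i\<in>I. smult (- w i) [:- cnj (w i), 1:])"
    unfolding reflect_poly_prod using reflect_linear by (rule prod.cong[OF refl])
  then show ?thesis
    by (simp only: prod_smult)
qed

lemma prod_linear_eq_binomial_if_power_sums_eq_0:
  fixes w :: "'i \<Rightarrow> complex"
  assumes "finite I" "I \<noteq> {}" and unit: "\<forall>i\<in>I. cmod (w i) = 1"
    and ps: "\<forall>m\<in>{1..k}. (\<Sum>i\<in>I. w i ^ m) = 0" and "card I < 2 * k"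
  shows "\<exists>c. (\<Prod>i\<in>I. [:- w i, 1:]) = monom 1 (card I) - [:c:]"
proof -
  define n where "n = card I"
  define q where "q = (\<Prod>i\<in>I. [:- w i, 1:])"
  define qc where "qc = (\<Prod>i\<in>I. [:- cnj (w i), 1:])"
  have ps_cnj: "\<forall>m\<in>{1..k}. (\<Sum>i\<in>I. cnj (w i) ^ m) = 0"
  proof
    fix m
    assume "m \<in> {1..k}"
    then have "cnj (\<Sum>i\<in>I. w i ^ m) = 0"
      using ps by simp
    then show "(\<Sum>i\<in>I. cnj (w i) ^ m) = 0"
      by simp
  qed
  have deg: "degree q = n" and monic: "coeff q n = 1"
    using lead_coeff_prod[of "\<lambda>i. [:- w i, 1:]" I]
    by (simp_all add: q_def n_def degree_prod_eq_sum_degree \<open>finite I\<close>)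
  have "coeff q t = 0" if t: "0 < t" "t < n" for t
  proof (cases "n - k \<le> t")
    case True
    then show ?thesis
      using coeff_prod_linear_eq_0_if_power_sums_eq_0[OF \<open>finite I\<close> ps] t
      by (simp add: q_def n_def)
  next
    case False
    have "coeff q t = coeff (reflect_poly q) (n - t)"
      using t deg by (simp add: coeff_reflect_poly)
    also have "\<dots> = (\<Prod>i\<in>I. - w i) * coeff qc (n - t)"
      using unit by (simp add: q_def qc_def reflect_prod_linear_unit_circle)
    also have "coeff qc (n - t) = 0"
      using coeff_prod_linear_eq_0_if_power_sums_eq_0[OF \<open>finite I\<close> ps_cnj] t False \<open>card I < 2 * k\<close>
      by (simp add: qc_def n_def)
    finally show ?thesis
      by simp
  qed
  moreover have "0 < n"
    using \<open>finite I\<close> \<open>I \<noteq> {}\<close> by (simp add: n_def card_gt_0_iff)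
  ultimately have "coeff q t = coeff (monom 1 n - [:- coeff q 0:]) t" for t
    using deg monic by (cases "t = 0"; cases "t < n"; cases "t = n") (auto simp: coeff_eq_0)
  then have "q = monom 1 n - [:- coeff q 0:]"
    by (rule poly_eqI)
  then show ?thesis
    unfolding q_def n_def by blast
qed

lemma inj_on_if_pderiv_prod_linear_nonzero:
  fixes w :: "'i \<Rightarrow> 'a::idom"
  assumes "finite I" and "\<forall>i\<in>I. poly (pderiv (\<Prod>l\<in>I. [:- w l, 1:])) (w i) \<noteq> 0"
  shows "inj_on w I"
proof (rule inj_onI, rule ccontr)
  fix i j
  assume "i \<in> I" "j \<in> I" "w i = w j" "i \<noteq> j"
  define L where "L = [:- w i, 1:]"
  define R where "R = (\<Prod>l\<in>I - {i} - {j}. [:- w l, 1:])"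
  have "(\<Prod>l\<in>I. [:- w l, 1:]) = L * (L * R)"
    using \<open>finite I\<close> \<open>i \<in> I\<close> \<open>j \<in> I\<close> \<open>i \<noteq> j\<close> \<open>w i = w j\<close>
    by (simp add: L_def R_def prod.remove[of I i] prod.remove[of "I - {i}" j])
  moreover have "poly L (w i) = 0"
    by (simp add: L_def)
  ultimately have "poly (pderiv (\<Prod>l\<in>I. [:- w l, 1:])) (w i) = 0"
    by (simp add: pderiv_mult)
  then show False
    using assms \<open>i \<in> I\<close> by blast
qed

lemma inj_on_and_equal_powers_if_power_sums_eq_0:
  fixes w :: "'i \<Rightarrow> complex"
  assumes "finite I" "I \<noteq> {}" and unit: "\<forall>i\<in>I. cmod (w i) = 1"
    and "\<forall>m\<in>{1..k}. (\<Sum>i\<in>I. w i ^ m) = 0" and "card I < 2 * k"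
  shows "inj_on w I" and "\<exists>c. \<forall>i\<in>I. w i ^ card I = c"
proof -
  define n where "n = card I"
  obtain c where q: "(\<Prod>i\<in>I. [:- w i, 1:]) = monom 1 n - [:c:]"
    using prod_linear_eq_binomial_if_power_sums_eq_0 assms unfolding n_def by blast
  have "0 < n"
    using \<open>finite I\<close> \<open>I \<noteq> {}\<close> by (simp add: n_def card_gt_0_iff)
  have "poly (\<Prod>l\<in>I. [:- w l, 1:]) (w i) = 0" if "i \<in> I" for i
    using \<open>finite I\<close> that by (auto simp: poly_prod)
  then show "\<exists>c. \<forall>i\<in>I. w i ^ card I = c"
    by (auto simp: q poly_monom n_def)
  have "w i \<noteq> 0" if "i \<in> I" for i
    using unit that by auto
  then have "\<forall>i\<in>I. poly (pderiv (\<Prod>l\<in>I. [:- w l, 1:])) (w i) \<noteq> 0"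
    using \<open>0 < n\<close> by (simp add: q pderiv_diff pderiv_monom poly_monom)
  then show "inj_on w I"
    by (rule inj_on_if_pderiv_prod_linear_nonzero[OF \<open>finite I\<close>])
qed

lemma nth_root_of_unity_eq_cis:
  assumes "0 < n" and "z ^ n = 1"
  shows "\<exists>j\<in>{1..n}. z = cis (2 * pi * real j / real n)"
proof -
  obtain j where "j < n" and j: "z = cis (2 * pi * real j / real n)"
    using bij_betw_imp_surj_on[OF bij_betw_roots_unity[OF \<open>0 < n\<close>]] assms(2) by force
  show ?thesis
  proof (cases "j = 0")
    case True
    then show ?thesis
      using j \<open>0 < n\<close> by (intro bexI[of _ n]) auto
  next
    case False
    then show ?thesis
      using j \<open>j < n\<close> by auto
  qed
qed

lemma regular_ngon_if_distinct_nth_powers_eq: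
  fixes w :: "nat \<Rightarrow> complex"
  assumes "0 < n" and "cmod u = 1" and inj: "inj_on w {1..n}"
    and pow: "\<forall>i\<in>{1..n}. w i ^ n = u ^ n"
    and A: "\<forall>i\<in>{1..n}. A i = Oc + of_real r * w i"
  shows "regular_ngon n Oc r A"
proof -
  have "u \<noteq> 0"
    using \<open>cmod u = 1\<close> by auto
  have "\<exists>j\<in>{1..n}. w i / u = cis (2 * pi * real j / real n)" if "i \<in> {1..n}" for i
    using pow that \<open>u \<noteq> 0\<close> \<open>0 < n\<close> by (intro nth_root_of_unity_eq_cis) (simp_all add: power_divide)
  then obtain \<sigma> where \<sigma>: "\<forall>i\<in>{1..n}. \<sigma> i \<in> {1..n} \<and> w i / u = cis (2 * pi * real (\<sigma> i) / real n)"
    by metis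
  have "inj_on \<sigma> {1..n}"
  proof (rule inj_onI)
    fix i j
    assume "i \<in> {1..n}" "j \<in> {1..n}" "\<sigma> i = \<sigma> j"
    then have "w i = w j"
      using \<sigma> \<open>u \<noteq> 0\<close> by (metis divide_cancel_right)
    then show "i = j"
      using inj \<open>i \<in> {1..n}\<close> \<open>j \<in> {1..n}\<close> by (meson inj_onD)
  qed
  moreover have "\<sigma> ` {1..n} \<subseteq> {1..n}"
    using \<sigma> by blast
  ultimately have bij: "bij_betw \<sigma> {1..n} {1..n}"
    by (simp add: bij_betw_def endo_inj_surj)
  have "cis (Arg u) = u"
    using \<open>u \<noteq> 0\<close> \<open>cmod u = 1\<close> by (simp add: cis_Arg sgn_eq)
  have "A i = Oc + of_real r * cis (Arg u + 2 * pi * real (\<sigma> i) / real n)" if "i \<in> {1..n}" for i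
  proof -
    have "w i = u * cis (2 * pi * real (\<sigma> i) / real n)"
      using \<sigma> that \<open>u \<noteq> 0\<close> by (simp add: divide_eq_eq mult.commute)
    then show ?thesis
      using A that \<open>cis (Arg u) = u\<close> by (simp flip: cis_mult)
  qed
  with bij show ?thesis
    unfolding regular_ngon_def by blast
qed

theorem proposition2p2:
  fixes n k :: nat and A :: "nat \<Rightarrow> complex" and Oc :: complex and r \<rho> :: real
  assumes "n \<ge> 2"
    and "r > 0" and "\<forall>i\<in>{1..n}. cmod (A i - Oc) = r"
    and "\<rho> > 0"
    and "k > 0" and "int k > \<lfloor>real n / 2\<rfloor>"
    and "\<exists>c::real. \<forall>X. cmod (X - Oc) = \<rho> \<longrightarrow> (\<Sum>i=1..n. (cmod (X - A i)) ^ (2 * k)) = c"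
  shows "regular_ngon n Oc r A"
proof -
  define w where "w i = (A i - Oc) / of_real r" for i
  have unit: "\<forall>i\<in>{1..n}. cmod (w i) = 1"
    using assms(2,3) by (simp add: w_def norm_divide)
  have A: "A i = Oc + of_real r * w i" for i
    using assms(2) by (simp add: w_def)
  obtain c where c: "\<forall>X. cmod (X - Oc) = \<rho> \<longrightarrow> (\<Sum>i=1..n. cmod (X - A i) ^ (2 * k)) = c"
    using assms(7) by blast
  have "\<forall>z. cmod z = 1 \<longrightarrow> (\<Sum>i=1..n. cmod (of_real \<rho> * z - of_real r * w i) ^ (2 * k)) = c"
    using c[rule_format, of "Oc + of_real \<rho> * _"] assms(4) by (simp add: A norm_mult)
  then have "\<forall>m\<in>{1..k}. (\<Sum>i=1..n. w i ^ m) = 0"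
    using power_sums_eq_0_if_norm_power_sum_constant[OF unit assms(4,2)] by blast
  moreover have "n < 2 * k"
    using assms(6) by linarith
  ultimately have "inj_on w {1..n}" and "\<exists>c. \<forall>i\<in>{1..n}. w i ^ n = c"
    using inj_on_and_equal_powers_if_power_sums_eq_0[of "{1..n}" w k] unit assms(1) by auto
  then show ?thesis
    using regular_ngon_if_distinct_nth_powers_eq[of n "w 1" w A Oc r] unit assms(1) A by auto
qed

end
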